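(* Let $n\in\mathbb{N}$ and let $a=(\alpha_1,\dots,\alpha_n)$, $b=(\beta_1,\dots,\beta_n)\in\mathbb{R}^n$ satisfy $\sum_{k=1}^n\alpha_k=\sum_{k=1}^n\beta_k$. Let $\mathcal{V}_a=\mathrm{conv}\{(\alpha_{\pi(1)},\dots,\alpha_{\pi(n)}):\pi\in S_n\}$ and $\mathcal{V}_b=\mathrm{conv}\{(\beta_{\pi(1)},\dots,\beta_{\pi(n)}):\pi\in S_n\}$. Then $\mathcal{V}_a$ and $\mathcal{V}_b$ cannot be properly separated by a hyperplane $H_{u,\alpha}=\{z\in\mathbb{R}^n:\langle z,u\rangle=\alpha\}$ with $u\in\mathbb{R}^n\setminus\{0\}$ and $\alpha\in\mathbb{R}$.
   Context: $S_n$ is the symmetric group on $\{1,\dots,n\}$ and $\langle\cdot,\cdot\rangle$ the standard inner product. Two convex sets $A,B$ are properly separated by a hyperplane $H$ if $A$ and $B$ lie in opposite closed half-spaces bounded by $H$ and are not both contained in $H$. *)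

theory Defs
  imports "HOL-Analysis.Analysis" "HOL-Combinatorics.Permutations"
begin

definition permutohedron :: "real ^ 'n \<Rightarrow> (real ^ 'n) set" where
  "permutohedron a = convex hull {(\<chi> i. a $ (\<pi> i)) | \<pi>. \<pi> permutes (UNIV :: 'n set)}"

definition hyperplane :: "real ^ 'n \<Rightarrow> real \<Rightarrow> (real ^ 'n) set" where
  "hyperplane u \<alpha> = {z. z \<bullet> u = \<alpha>}"

definition properly_separated_by :: "(real ^ 'n) set \<Rightarrow> (real ^ 'n) set \<Rightarrow> real ^ 'n \<Rightarrow> real \<Rightarrow> bool" where
  "properly_separated_by A B u \<alpha> \<longleftrightarrow>
     (((\<forall>x\<in>A. x \<bullet> u \<le> \<alpha>) \<and> (\<forall>y\<in>B. \<alpha> \<le> y \<bullet> u)) \<or>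
      ((\<forall>x\<in>A. \<alpha> \<le> x \<bullet> u) \<and> (\<forall>y\<in>B. y \<bullet> u \<le> \<alpha>))) \<and>
     \<not> (A \<subseteq> hyperplane u \<alpha> \<and> B \<subseteq> hyperplane u \<alpha>)"

end

theory Submission
  imports Defs
begin

text \<open>Summed over all permutations, the vertices of the permutohedron of \<open>a\<close> give a vector
  whose entries all equal \<open>(n-1)! \<Sum>a\<close>. Hence permutohedra of vectors with equal coordinate
  sums have the same vertex sum, and so the average of \<open>\<langle>v, u\<rangle>\<close> over the vertices \<open>v\<close> is the
  same for both. If all vertices of one lie on one side of \<open>H\<^sub>u\<^sub>,\<^sub>\<alpha>\<close> and all vertices of the
  other on the other side, both averages must equal \<open>\<alpha>\<close>; an average of numbers \<open>\<le> \<alpha>\<close> equal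
  to \<open>\<alpha>\<close> forces every number to be \<open>\<alpha>\<close>, so both permutohedra lie in \<open>H\<^sub>u\<^sub>,\<^sub>\<alpha>\<close>.\<close>

definition permute_vec :: "('n \<Rightarrow> 'n) \<Rightarrow> 'a ^ 'n \<Rightarrow> 'a ^ 'n" where
  "permute_vec \<pi> a = (\<chi> i. a $ \<pi> i)"

lemma permutohedron_eq_convex_hull:
  "permutohedron a = convex hull ((\<lambda>\<pi>. permute_vec \<pi> a) ` {\<pi>. \<pi> permutes UNIV})"
  unfolding permutohedron_def permute_vec_def by (simp add: setcompr_eq_image)

lemma permute_vec_in_permutohedron:
  "\<pi> permutes UNIV \<Longrightarrow> permute_vec \<pi> a \<in> permutohedron a"
  unfolding permutohedron_eq_convex_hull by (intro hull_inc) blast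

lemma sum_permutations_apply_eq:
  fixes f :: "'a \<Rightarrow> 'b::comm_monoid_add"
  assumes "i \<in> S" "j \<in> S"
  shows "(\<Sum>\<pi>\<in>{\<pi>. \<pi> permutes S}. f (\<pi> i)) = (\<Sum>\<pi>\<in>{\<pi>. \<pi> permutes S}. f (\<pi> j))"
proof -
  let ?t = "Transposition.transpose i j"
  have t: "?t permutes S" using assms by (rule permutes_swap_id)
  have "bij_betw (\<lambda>\<pi>. \<pi> \<circ> ?t) {\<pi>. \<pi> permutes S} {\<pi>. \<pi> permutes S}"
    by (rule bij_betwI[where g="\<lambda>\<pi>. \<pi> \<circ> ?t"])
       (auto intro: permutes_compose[OF t] simp: comp_assoc)
  from sum.reindex_bij_betw[OF this, of "\<lambda>\<pi>. f (\<pi> j)"] show ?thesis by simp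
qed

lemma card_mult_sum_permutations_apply:
  fixes f :: "'n::finite \<Rightarrow> real"
  shows "real CARD('n) * (\<Sum>\<pi>\<in>{\<pi>. \<pi> permutes UNIV}. f (\<pi> i))
       = real (card {\<pi>. \<pi> permutes (UNIV :: 'n set)}) * sum f UNIV"
proof -
  let ?P = "{\<pi>. \<pi> permutes (UNIV :: 'n set)}"
  have "real CARD('n) * (\<Sum>\<pi>\<in>?P. f (\<pi> i)) = (\<Sum>j\<in>(UNIV :: 'n set). \<Sum>\<pi>\<in>?P. f (\<pi> i))"
    by simp
  also have "\<dots> = (\<Sum>j\<in>UNIV. \<Sum>\<pi>\<in>?P. f (\<pi> j))"
    by (intro sum.cong refl sum_permutations_apply_eq) auto
  also have "\<dots> = (\<Sum>\<pi>\<in>?P. \<Sum>j\<in>UNIV. f (\<pi> j))"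
    by (rule sum.swap)
  also have "\<dots> = (\<Sum>\<pi>\<in>?P. sum f UNIV)"
    by (intro sum.cong refl sum.reindex_bij_betw permutes_imp_bij) simp
  finally show ?thesis by simp
qed

lemma sum_permute_vec_eq:
  fixes a b :: "real ^ 'n"
  assumes "(\<Sum>k\<in>UNIV. a $ k) = (\<Sum>k\<in>UNIV. b $ k)"
  shows "(\<Sum>\<pi>\<in>{\<pi>. \<pi> permutes UNIV}. permute_vec \<pi> a) = (\<Sum>\<pi>\<in>{\<pi>. \<pi> permutes UNIV}. permute_vec \<pi> b)"
unfolding vec_eq_iff
proof
  fix i :: 'n
  have "real CARD('n) * (\<Sum>\<pi>\<in>{\<pi>. \<pi> permutes UNIV}. a $ \<pi> i)
      = real CARD('n) * (\<Sum>\<pi>\<in>{\<pi>. \<pi> permutes UNIV}. b $ \<pi> i)"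
    using card_mult_sum_permutations_apply[of "vec_nth a" i]
      card_mult_sum_permutations_apply[of "vec_nth b" i] assms by simp
  then show "(\<Sum>\<pi>\<in>{\<pi>. \<pi> permutes UNIV}. permute_vec \<pi> a) $ i
           = (\<Sum>\<pi>\<in>{\<pi>. \<pi> permutes UNIV}. permute_vec \<pi> b) $ i"
    by (simp add: permute_vec_def)
qed

lemma sum_eq_card_mult_imp_all_eq:
  fixes f :: "'a \<Rightarrow> real"
  assumes "finite A" "\<forall>x\<in>A. f x \<le> c" "sum f A = real (card A) * c"
  shows "\<forall>x\<in>A. f x = c"
proof (rule ccontr)
  assume "\<not> (\<forall>x\<in>A. f x = c)"
  with assms(2) have "\<exists>x\<in>A. f x < c" by force
  with assms(1,2) have "sum f A < (\<Sum>x\<in>A. c)" by (intro sum_strict_mono_ex1) auto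
  with assms(3) show False by simp
qed

lemma hyperplane_uminus: "hyperplane (- u) (- \<alpha>) = hyperplane u \<alpha>"
  unfolding hyperplane_def by auto

lemma convex_hyperplane': "convex (hyperplane u \<alpha>)"
  unfolding hyperplane_def using convex_hyperplane[of u \<alpha>] by (simp add: inner_commute)

lemma permutohedron_subset_hyperplane:
  fixes a u :: "real ^ 'n"
  assumes below: "\<forall>x\<in>permutohedron a. x \<bullet> u \<le> \<alpha>"
    and average: "(\<Sum>\<pi>\<in>{\<pi>. \<pi> permutes UNIV}. permute_vec \<pi> a) \<bullet> u
                = real (card {\<pi>. \<pi> permutes (UNIV :: 'n set)}) * \<alpha>"
  shows "permutohedron a \<subseteq> hyperplane u \<alpha>"
proof -
  let ?P = "{\<pi>. \<pi> permutes (UNIV :: 'n set)}"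
  have "\<forall>\<pi>\<in>?P. permute_vec \<pi> a \<bullet> u = \<alpha>"
    using below average permute_vec_in_permutohedron
    by (intro sum_eq_card_mult_imp_all_eq) (auto simp: inner_sum_left)
  then have "(\<lambda>\<pi>. permute_vec \<pi> a) ` ?P \<subseteq> hyperplane u \<alpha>"
    by (auto simp: hyperplane_def)
  then show ?thesis
    unfolding permutohedron_eq_convex_hull by (rule hull_minimal) (rule convex_hyperplane')
qed

lemma permutohedra_weakly_separated_imp_in_hyperplane:
  fixes a b u :: "real ^ 'n"
  assumes "(\<Sum>k\<in>UNIV. a $ k) = (\<Sum>k\<in>UNIV. b $ k)"
    and below: "\<forall>x\<in>permutohedron a. x \<bullet> u \<le> \<alpha>"
    and above: "\<forall>y\<in>permutohedron b. \<alpha> \<le> y \<bullet> u"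
  shows "permutohedron a \<subseteq> hyperplane u \<alpha> \<and> permutohedron b \<subseteq> hyperplane u \<alpha>"
proof -
  let ?P = "{\<pi>. \<pi> permutes (UNIV :: 'n set)}"
  let ?s = "\<lambda>c. (\<Sum>\<pi>\<in>?P. permute_vec \<pi> c) \<bullet> u"
  have "?s a \<le> (\<Sum>\<pi>\<in>?P. \<alpha>)"
    unfolding inner_sum_left using below permute_vec_in_permutohedron by (intro sum_mono) auto
  moreover have "(\<Sum>\<pi>\<in>?P. \<alpha>) \<le> ?s b"
    unfolding inner_sum_left using above permute_vec_in_permutohedron by (intro sum_mono) auto
  moreover have "?s a = ?s b"
    using sum_permute_vec_eq[OF assms(1)] by simp
  moreover have "(\<Sum>\<pi>\<in>?P. \<alpha>) = real (card ?P) * \<alpha>"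
    by simp
  ultimately have "?s a = real (card ?P) * \<alpha>" "?s b = real (card ?P) * \<alpha>"
    by linarith+
  moreover have "\<forall>y\<in>permutohedron b. y \<bullet> - u \<le> - \<alpha>"
    using above by simp
  ultimately show ?thesis
    using permutohedron_subset_hyperplane[OF below]
      permutohedron_subset_hyperplane[of b "- u" "- \<alpha>"]
    by (simp add: hyperplane_uminus)
qed

theorem lemma2:
  fixes a b :: "real ^ 'n"
  assumes "(\<Sum>k\<in>UNIV. a $ k) = (\<Sum>k\<in>UNIV. b $ k)"
  shows "\<not> (\<exists>u \<alpha>. u \<noteq> 0 \<and> properly_separated_by (permutohedron a) (permutohedron b) u \<alpha>)"
proof
  assume "\<exists>u \<alpha>. u \<noteq> 0 \<and> properly_separated_by (permutohedron a) (permutohedron b) u \<alpha>"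
  then obtain u \<alpha> where "properly_separated_by (permutohedron a) (permutohedron b) u \<alpha>"
    by blast
  then show False
    unfolding properly_separated_by_def
    using permutohedra_weakly_separated_imp_in_hyperplane[OF assms, of u \<alpha>]
      permutohedra_weakly_separated_imp_in_hyperplane[OF assms[symmetric], of u \<alpha>]
    by blast
qed

end
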